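(* Let $V$ be a real vector space of dimension $m\ge3$ with a non-degenerate symmetric inner product of arbitrary signature, and let $R$ be an algebraic curvature tensor on $V$. The following are equivalent: (1) $R$ is $1$ Osserman; (2) for every $x\in\mathcal{N}$, every $y\in V_{\mathbb{C}}$, and every $k\ge1$, $\operatorname{trace}\{\mathcal{J}_R(x+ty)^k\}=O(t^k)$ as $t\downarrow0$.
   Context: An algebraic curvature tensor is $R\in\otimes^4V^*$ with $R(x,y,z,w)=R(z,w,x,y)=-R(y,x,z,w)$ and $R(x,y,z,w)+R(y,z,x,w)+R(z,x,y,w)=0$. The Jacobi operator is defined by $(\mathcal{J}_R(x)y,w)=R(y,x,x,w)$. $R$ is $1$ Osserman if the eigenvalues of $\mathcal{J}_R(x)$ are constant on each of the pseudo-spheres $\{x\in V:(x,x)=1\}$ and $\{x\in V:(x,x)=-1\}$ (equivalently, for each $k$ there is a constant $c_k$ with $\operatorname{trace}\{\mathcal{J}_R(x)^k\}=c_k(x,x)^k$ for all $x\in V$). Everything is extended complex-multilinearly to $V_{\mathbb{C}}=V\otimes\mathbb{C}$; $\mathcal{N}=\{v\in V_{\mathbb{C}}:(v,v)=0\}$. *)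

theory Defs
  imports "HOL-Analysis.Analysis" "HOL-Library.Landau_Symbols"
begin

text \<open>The inner product is given by its Gram matrix G with respect to the standard basis;
  the curvature tensor R by its components R i j k l = R(e_i,e_j,e_k,e_l).\<close>

definition rform :: "real^'n::finite^'n \<Rightarrow> real^'n \<Rightarrow> real^'n \<Rightarrow> real" where
  "rform G x y = (\<Sum>i\<in>UNIV. \<Sum>j\<in>UNIV. G$i$j * x$i * y$j)"

definition cform :: "real^'n::finite^'n \<Rightarrow> complex^'n \<Rightarrow> complex^'n \<Rightarrow> complex" where
  "cform G x y = (\<Sum>i\<in>UNIV. \<Sum>j\<in>UNIV. complex_of_real (G$i$j) * x$i * y$j)"

definition inner_product_space :: "real^'n::finite^'n \<Rightarrow> bool" where
  "inner_product_space G \<longleftrightarrow>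
     (\<forall>x y. rform G x y = rform G y x) \<and>
     (\<forall>x. (\<forall>y. rform G x y = 0) \<longrightarrow> x = 0)"

definition rtens :: "('n::finite \<Rightarrow> 'n \<Rightarrow> 'n \<Rightarrow> 'n \<Rightarrow> real) \<Rightarrow> real^'n \<Rightarrow> real^'n \<Rightarrow> real^'n \<Rightarrow> real^'n \<Rightarrow> real" where
  "rtens R x y z w = (\<Sum>i\<in>UNIV. \<Sum>j\<in>UNIV. \<Sum>k\<in>UNIV. \<Sum>l\<in>UNIV.
       R i j k l * x$i * y$j * z$k * w$l)"

definition ctens :: "('n::finite \<Rightarrow> 'n \<Rightarrow> 'n \<Rightarrow> 'n \<Rightarrow> real) \<Rightarrow> complex^'n \<Rightarrow> complex^'n \<Rightarrow> complex^'n \<Rightarrow> complex^'n \<Rightarrow> complex" where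
  "ctens R x y z w = (\<Sum>i\<in>UNIV. \<Sum>j\<in>UNIV. \<Sum>k\<in>UNIV. \<Sum>l\<in>UNIV.
       complex_of_real (R i j k l) * x$i * y$j * z$k * w$l)"

definition alg_curv_tensor :: "('n::finite \<Rightarrow> 'n \<Rightarrow> 'n \<Rightarrow> 'n \<Rightarrow> real) \<Rightarrow> bool" where
  "alg_curv_tensor R \<longleftrightarrow>
     (\<forall>x y z w. rtens R x y z w = rtens R z w x y \<and>
                rtens R x y z w = - rtens R y x z w \<and>
                rtens R x y z w + rtens R y z x w + rtens R z x y w = 0)"

definition rjacobi :: "real^'n^'n \<Rightarrow> ('n::finite \<Rightarrow> 'n \<Rightarrow> 'n \<Rightarrow> 'n \<Rightarrow> real) \<Rightarrow> real^'n \<Rightarrow> real^'n^'n" where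
  "rjacobi G R x = (THE J. \<forall>y w. rform G (J *v y) w = rtens R y x x w)"

definition cjacobi :: "real^'n^'n \<Rightarrow> ('n::finite \<Rightarrow> 'n \<Rightarrow> 'n \<Rightarrow> 'n \<Rightarrow> real) \<Rightarrow> complex^'n \<Rightarrow> complex^'n^'n" where
  "cjacobi G R x = (THE J. \<forall>y w. cform G (J *v y) w = ctens R y x x w)"

fun mpow :: "'a::semiring_1^'n^'n \<Rightarrow> nat \<Rightarrow> 'a^'n^'n" where
  "mpow A 0 = mat 1"
| "mpow A (Suc k) = A ** mpow A k"

definition osserman1 :: "real^'n^'n \<Rightarrow> ('n::finite \<Rightarrow> 'n \<Rightarrow> 'n \<Rightarrow> 'n \<Rightarrow> real) \<Rightarrow> bool" where
  "osserman1 G R \<longleftrightarrow>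
     (\<forall>k::nat. \<exists>c::real. \<forall>x. trace (mpow (rjacobi G R x) k) = c * (rform G x x) ^ k)"

end

theory Submission
  imports Defs "HOL-Computational_Algebra.Polynomial"
begin

text \<open>For each k, f(z) = trace J(z)^k is a homogeneous polynomial of degree 2k on the
  complexification. If R is Osserman, then f = c Q^k on V and hence on V_C, and on a line
  x + t y through a null vector Q(x + t y) = t (2 (x,y) + t (y,y)), so f(x + t y) = O(t^k).
  Conversely, let n be null and (w,w), (n,w) nonzero. Then Q has a second zero t0 on the line
  n + t w, the hypothesis makes the degree 2k polynomial t \<mapsto> f(n + t w) vanish to order k at 0
  and at t0, so it is a multiple of (t (t - t0))^k, i.e. of Q(n + t w)^k, and homogeneity
  identifies the factor as f(w)/Q(w)^k. Every non-null v spanning a non-degenerate plane with w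
  lies on such a line, and two real non-null vectors can be joined through one generic complex w,
  so f/Q^k is constant on non-null vectors; on null vectors f vanishes, as a constant that is
  O(t^k) must be 0.\<close>

section \<open>Matrices\<close>

lemma map_matrix_mult:
  fixes h :: "'a::semiring_1 \<Rightarrow> 'b::semiring_1" and A :: "'a^'k^'m" and B :: "'a^'n^'k"
  assumes add: "\<And>x y. h (x + y) = h x + h y" and mult: "\<And>x y. h (x * y) = h x * h y"
    and zero: "h 0 = 0"
  shows "map_matrix h (A ** B) = map_matrix h A ** map_matrix h B"
  by (simp add: vec_eq_iff matrix_matrix_mult_def mult sum_comp_morphism[OF zero add, symmetric] o_def)

lemma map_matrix_mat1: "h 0 = 0 \<Longrightarrow> h 1 = 1 \<Longrightarrow> map_matrix h (mat 1) = mat 1"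
  by (simp add: vec_eq_iff mat_def)

lemma map_matrix_mpow:
  fixes h :: "'a::semiring_1 \<Rightarrow> 'b::semiring_1"
  assumes add: "\<And>x y. h (x + y) = h x + h y" and mult: "\<And>x y. h (x * y) = h x * h y"
    and zero: "h 0 = 0" and one: "h 1 = 1"
  shows "map_matrix h (mpow A k) = mpow (map_matrix h A) k"
  by (induction k) (simp_all add: map_matrix_mat1[OF zero one] map_matrix_mult[OF add mult zero])

lemma trace_map_matrix:
  fixes h :: "'a::semiring_1 \<Rightarrow> 'b::semiring_1"
  assumes "\<And>x y. h (x + y) = h x + h y" and "h 0 = 0"
  shows "h (trace A) = trace (map_matrix h A)"
  unfolding trace_def by (simp add: sum_comp_morphism[OF assms(2,1), symmetric] o_def)

lemma map_matrix_scale_mult_left: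
  "map_matrix ((*) c) (A ** B) = map_matrix ((*) c) A ** (B :: 'a::comm_semiring_1^'n^'k)"
  by (simp add: matrix_matrix_mult_def vec_eq_iff sum_distrib_left mult.assoc)

lemma map_matrix_scale_mult_right:
  "map_matrix ((*) c) (A ** B) = (A :: 'a::comm_semiring_1^'k^'m) ** map_matrix ((*) c) B"
  by (simp add: matrix_matrix_mult_def vec_eq_iff sum_distrib_left mult.left_commute)

lemma mpow_map_matrix_scale:
  "mpow (map_matrix ((*) c) A) k = map_matrix ((*) (c ^ k)) (mpow (A :: 'a::comm_semiring_1^'n^'n) k)"
proof (induction k)
  case 0
  show ?case by (simp add: vec_eq_iff mat_def)
next
  case (Suc k)
  have "mpow (map_matrix ((*) c) A) (Suc k) = map_matrix ((*) c) (A ** map_matrix ((*) (c ^ k)) (mpow A k))"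
    by (simp add: Suc map_matrix_scale_mult_left)
  also have "\<dots> = map_matrix ((*) c) (map_matrix ((*) (c ^ k)) (A ** mpow A k))"
    by (simp add: map_matrix_scale_mult_right)
  finally show ?case by (simp add: vec_eq_iff mult.assoc)
qed

lemma trace_map_matrix_scale: "trace (map_matrix ((*) c) A) = c * trace (A :: 'a::comm_semiring_1^'n^'n)"
  by (simp add: trace_def sum_distrib_left)

lemma degree_matrix_mult_le:
  fixes A :: "'a::comm_semiring_1 poly^'k^'m" and B :: "'a poly^'n^'k"
  assumes "\<And>i j. degree (A$i$j) \<le> a" and "\<And>i j. degree (B$i$j) \<le> b"
  shows "degree ((A ** B)$i$j) \<le> a + b"
  unfolding matrix_matrix_mult_def vec_lambda_beta
  by (intro degree_sum_le order.trans[OF degree_mult_le] add_mono assms) simp_all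

lemma degree_mpow_le:
  fixes A :: "'a::comm_semiring_1 poly^'n^'n"
  assumes "\<And>i j. degree (A$i$j) \<le> a"
  shows "degree (mpow A k $ i $ j) \<le> a * k"
proof (induction k arbitrary: i j)
  case 0
  show ?case by (simp add: mat_def)
next
  case (Suc k)
  show ?case using degree_matrix_mult_le[OF assms Suc] by simp
qed

section \<open>Jacobi operators as matrices\<close>

text \<open>The matrix of the form (y, w) \<mapsto> R(y, x, x, w); the map c carries the real components of R
  into the scalars (identity, complex_of_real, or constant complex polynomials).\<close>
definition jacobi_form ::
  "(real \<Rightarrow> 'a::comm_semiring_1) \<Rightarrow> ('n::finite \<Rightarrow> 'n \<Rightarrow> 'n \<Rightarrow> 'n \<Rightarrow> real) \<Rightarrow> 'a^'n \<Rightarrow> 'a^'n^'n"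
  where "jacobi_form c R x = (\<chi> l i. \<Sum>j\<in>UNIV. \<Sum>k\<in>UNIV. c (R i j k l) * x$j * x$k)"

lemma sum_rotate4:
  "(\<Sum>i\<in>A. \<Sum>j\<in>B. \<Sum>k\<in>C. \<Sum>l\<in>D. f i j k l)
    = (\<Sum>l\<in>D. \<Sum>i\<in>A. \<Sum>j\<in>B. \<Sum>k\<in>C. f i j k l)"
proof -
  have "(\<Sum>i\<in>A. \<Sum>j\<in>B. \<Sum>k\<in>C. \<Sum>l\<in>D. f i j k l)
      = (\<Sum>i\<in>A. \<Sum>j\<in>B. \<Sum>l\<in>D. \<Sum>k\<in>C. f i j k l)"
    by (intro sum.cong refl, rule sum.swap)
  also have "\<dots> = (\<Sum>i\<in>A. \<Sum>l\<in>D. \<Sum>j\<in>B. \<Sum>k\<in>C. f i j k l)"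
    by (intro sum.cong refl, rule sum.swap)
  also have "\<dots> = (\<Sum>l\<in>D. \<Sum>i\<in>A. \<Sum>j\<in>B. \<Sum>k\<in>C. f i j k l)"
    by (rule sum.swap)
  finally show ?thesis .
qed

lemma rtens_eq_jacobi_form: "rtens R y x x w = (\<Sum>l\<in>UNIV. (jacobi_form id R x *v y)$l * w$l)"
  unfolding rtens_def jacobi_form_def matrix_vector_mult_def
  by (subst sum_rotate4) (simp add: sum_distrib_left sum_distrib_right mult_ac)

lemma ctens_eq_jacobi_form:
  "ctens R y x x w = (\<Sum>l\<in>UNIV. (jacobi_form complex_of_real R x *v y)$l * w$l)"
  unfolding ctens_def jacobi_form_def matrix_vector_mult_def
  by (subst sum_rotate4) (simp add: sum_distrib_left sum_distrib_right mult_ac)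

lemma rform_eq_transpose: "rform G u w = (\<Sum>l\<in>UNIV. (transpose G *v u)$l * w$l)"
  unfolding rform_def transpose_def matrix_vector_mult_def
  by (subst sum.swap) (simp add: sum_distrib_left sum_distrib_right mult_ac)

lemma cform_eq_transpose:
  "cform G u w = (\<Sum>l\<in>UNIV. (map_matrix complex_of_real (transpose G) *v u)$l * w$l)"
  unfolding cform_def transpose_def matrix_vector_mult_def map_matrix_def
  by (subst sum.swap) (simp add: sum_distrib_left sum_distrib_right mult_ac)

lemma sum_mult_axis: "(\<Sum>l\<in>UNIV. (v::'a::semiring_1^'n)$l * axis j 1 $ l) = v$j"
  by (simp add: axis_def if_distrib sum.delta' cong: if_cong)

lemma THE_matrix_of_form:
  fixes Gt H A :: "'a::comm_semiring_1^'n^'n"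
  assumes HG: "H ** Gt = mat 1" and GH: "Gt ** H = mat 1"
  shows "(THE J. \<forall>y w. (\<Sum>l\<in>UNIV. (Gt *v (J *v y))$l * w$l) = (\<Sum>l\<in>UNIV. (A *v y)$l * w$l))
    = H ** A"
proof (rule the_equality)
  show "\<forall>y w. (\<Sum>l\<in>UNIV. (Gt *v ((H ** A) *v y))$l * w$l) = (\<Sum>l\<in>UNIV. (A *v y)$l * w$l)"
    by (simp add: matrix_vector_mul_assoc matrix_mul_assoc GH)
next
  fix J
  assume J: "\<forall>y w. (\<Sum>l\<in>UNIV. (Gt *v (J *v y))$l * w$l) = (\<Sum>l\<in>UNIV. (A *v y)$l * w$l)"
  have "Gt *v (J *v y) = A *v y" for y
    using J[rule_format, of y "axis _ 1"] by (simp add: vec_eq_iff sum_mult_axis)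
  then have "J *v y = (H ** A) *v y" for y
    by (metis HG matrix_vector_mul_assoc matrix_vector_mul_lid)
  then show "J = H ** A"
    by (simp add: matrix_eq)
qed

lemma inner_product_space_invertible:
  assumes "inner_product_space G"
  obtains H where "H ** transpose G = mat 1" "transpose G ** H = mat 1"
proof -
  have "transpose G *v x = 0 \<Longrightarrow> x = 0" for x
    using assms unfolding inner_product_space_def by (simp add: rform_eq_transpose)
  then obtain H where "H ** transpose G = mat 1"
    using matrix_left_invertible_ker by blast
  then show ?thesis
    using that matrix_left_right_inverse by blast
qed

lemma rjacobi_eq:
  assumes "H ** transpose G = mat 1" "transpose G ** H = mat 1"
  shows "rjacobi G R x = H ** jacobi_form id R x"
  unfolding rjacobi_def rform_eq_transpose rtens_eq_jacobi_form
  by (rule THE_matrix_of_form[OF assms])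

lemma cjacobi_eq:
  assumes "H ** transpose G = mat 1" "transpose G ** H = mat 1"
  shows "cjacobi G R z = map_matrix complex_of_real H ** jacobi_form complex_of_real R z"
  unfolding cjacobi_def cform_eq_transpose ctens_eq_jacobi_form
  by (rule THE_matrix_of_form)
    (simp_all add: assms map_matrix_mat1 flip: map_matrix_mult[of complex_of_real])

lemma map_matrix_jacobi_form:
  fixes h :: "'a::comm_semiring_1 \<Rightarrow> 'b::comm_semiring_1"
  assumes add: "\<And>x y. h (x + y) = h x + h y" and mult: "\<And>x y. h (x * y) = h x * h y"
    and zero: "h 0 = 0"
  shows "map_matrix h (jacobi_form c R x) = jacobi_form (h \<circ> c) R (\<chi> j. h (x$j))"
  by (simp add: jacobi_form_def vec_eq_iff mult sum_comp_morphism[OF zero add, symmetric] o_def)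

lemma jacobi_form_scale: "jacobi_form c R (s *s x) = map_matrix ((*) (s^2)) (jacobi_form c R x)"
  by (simp add: jacobi_form_def vec_eq_iff sum_distrib_left power2_eq_square mult_ac)

lemma degree_jacobi_form_le:
  assumes "\<And>j. degree (x$j) \<le> 1"
  shows "degree (jacobi_form (\<lambda>r. [:c r:]) R x $ l $ i) \<le> 2"
  unfolding jacobi_form_def vec_lambda_beta
proof (intro degree_sum_le)
  fix j k
  have "degree ([:c (R i j k l):] * x$j * x$k) \<le> (0 + 1) + 1"
    by (intro order.trans[OF degree_mult_le] add_mono assms) simp
  then show "degree ([:c (R i j k l):] * x$j * x$k) \<le> 2"
    by simp
qed simp_all

definition rtrace_jacobi ::
  "real^'n^'n \<Rightarrow> ('n::finite \<Rightarrow> 'n \<Rightarrow> 'n \<Rightarrow> 'n \<Rightarrow> real) \<Rightarrow> nat \<Rightarrow> real^'n \<Rightarrow> real"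
  where "rtrace_jacobi G R k x = trace (mpow (rjacobi G R x) k)"

definition ctrace_jacobi ::
  "real^'n^'n \<Rightarrow> ('n::finite \<Rightarrow> 'n \<Rightarrow> 'n \<Rightarrow> 'n \<Rightarrow> real) \<Rightarrow> nat \<Rightarrow> complex^'n \<Rightarrow> complex"
  where "ctrace_jacobi G R k z = trace (mpow (cjacobi G R z) k)"

definition cvec :: "real^'n::finite \<Rightarrow> complex^'n"
  where "cvec x = (\<chi> i. complex_of_real (x$i))"

lemma cvec_nth [simp]: "cvec x $ i = complex_of_real (x$i)"
  by (simp add: cvec_def)

lemma ctrace_jacobi_cvec:
  assumes "inner_product_space G"
  shows "ctrace_jacobi G R k (cvec x) = complex_of_real (rtrace_jacobi G R k x)"
proof -
  obtain H where H: "H ** transpose G = mat 1" "transpose G ** H = mat 1"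
    using inner_product_space_invertible[OF assms] .
  have "cjacobi G R (cvec x) = map_matrix complex_of_real (rjacobi G R x)"
    by (simp add: cjacobi_eq[OF H] rjacobi_eq[OF H] map_matrix_mult map_matrix_jacobi_form
        cvec_def o_def)
  then show ?thesis
    unfolding ctrace_jacobi_def rtrace_jacobi_def
    by (simp add: trace_map_matrix[of complex_of_real] map_matrix_mpow[of complex_of_real])
qed

lemma ctrace_jacobi_scale:
  assumes "inner_product_space G"
  shows "ctrace_jacobi G R k (c *s z) = c ^ (2 * k) * ctrace_jacobi G R k z"
proof -
  obtain H where H: "H ** transpose G = mat 1" "transpose G ** H = mat 1"
    using inner_product_space_invertible[OF assms] .
  have "cjacobi G R (c *s z) = map_matrix ((*) (c^2)) (cjacobi G R z)"
    by (simp add: cjacobi_eq[OF H] jacobi_form_scale map_matrix_scale_mult_right)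
  then show ?thesis
    unfolding ctrace_jacobi_def
    by (simp add: mpow_map_matrix_scale trace_map_matrix_scale power_mult)
qed

lemma ctrace_jacobi_line_poly:
  assumes "inner_product_space G"
  obtains p where "degree p \<le> 2 * k" "\<And>t. ctrace_jacobi G R k (u + t *s v) = poly p t"
proof -
  obtain H where H: "H ** transpose G = mat 1" "transpose G ** H = mat 1"
    using inner_product_space_invertible[OF assms] .
  define P where "P = map_matrix (\<lambda>r. [:complex_of_real r:]) H
    ** jacobi_form (\<lambda>r. [:complex_of_real r:]) R (\<chi> j. [:u$j, v$j:])"
  have eval: "map_matrix (\<lambda>p. poly p t) P = cjacobi G R (u + t *s v)" for t
  proof -
    have "map_matrix (\<lambda>p. poly p t) (map_matrix (\<lambda>r. [:complex_of_real r:]) H)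
        = map_matrix complex_of_real H"
      by (simp add: vec_eq_iff)
    moreover have "(\<chi> j. poly [:u$j, v$j:] t) = u + t *s v"
      by (simp add: vec_eq_iff mult.commute)
    ultimately show ?thesis
      by (simp add: P_def cjacobi_eq[OF H] map_matrix_mult[of "\<lambda>p. poly p t"]
          map_matrix_jacobi_form[of "\<lambda>p. poly p t"] o_def)
  qed
  have "degree (P $ i $ j) \<le> 0 + 2" for i j
    unfolding P_def by (intro degree_matrix_mult_le degree_jacobi_form_le) simp_all
  then have "degree (mpow P k $ i $ i) \<le> 2 * k" for i
    using degree_mpow_le[of P 2] by (metis add_0)
  then have "degree (trace (mpow P k)) \<le> 2 * k"
    unfolding trace_def by (intro degree_sum_le) simp_all
  moreover have "ctrace_jacobi G R k (u + t *s v) = poly (trace (mpow P k)) t" for t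
    unfolding ctrace_jacobi_def
    by (simp add: trace_map_matrix[of "\<lambda>p. poly p t"] map_matrix_mpow[of "\<lambda>p. poly p t"] eval)
  ultimately show ?thesis
    using that by blast
qed

section \<open>The inner product\<close>

lemma cform_add_left: "cform G (a + b) w = cform G a w + cform G b w"
  by (simp add: cform_def algebra_simps sum.distrib)

lemma cform_add_right: "cform G w (a + b) = cform G w a + cform G w b"
  by (simp add: cform_def algebra_simps sum.distrib)

lemma cform_scale_left: "cform G (c *s a) w = c * cform G a w"
  by (simp add: cform_def algebra_simps sum_distrib_left)

lemma cform_scale_right: "cform G w (c *s a) = c * cform G w a"
  by (simp add: cform_def algebra_simps sum_distrib_left)

lemma rform_add_left: "rform G (a + b) w = rform G a w + rform G b w"
  by (simp add: rform_def algebra_simps sum.distrib)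

lemma rform_add_right: "rform G w (a + b) = rform G w a + rform G w b"
  by (simp add: rform_def algebra_simps sum.distrib)

lemma rform_diff_left: "rform G (a - b) w = rform G a w - rform G b w"
  by (simp add: rform_def algebra_simps sum_subtractf)

lemma rform_diff_right: "rform G w (a - b) = rform G w a - rform G w b"
  by (simp add: rform_def algebra_simps sum_subtractf)

lemma cform_cvec: "cform G (cvec u) (cvec w) = complex_of_real (rform G u w)"
  by (simp add: cform_def rform_def)

lemma rform_axis: "rform G (axis i 1) (axis j 1) = G$i$j"
proof -
  have "G$a$b * axis i 1 $ a * axis j 1 $ b = (if b = j then if a = i then G$i$j else 0 else 0)"
    for a b
    by (simp add: axis_def)
  then show ?thesis
    unfolding rform_def by (simp add: sum.delta)
qed

lemma inner_product_space_symmetric: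
  assumes "inner_product_space G"
  shows "G$i$j = G$j$i"
  using assms unfolding inner_product_space_def by (metis rform_axis)

lemma cform_commute:
  assumes "inner_product_space G"
  shows "cform G u w = cform G w u"
  unfolding cform_def
  by (subst sum.swap) (simp add: inner_product_space_symmetric[OF assms] mult_ac)

lemma cform_line:
  assumes "inner_product_space G"
  shows "cform G (u + t *s v) (u + t *s v) = cform G u u + 2 * t * cform G u v + t^2 * cform G v v"
  by (simp add: cform_add_left cform_add_right cform_scale_left cform_scale_right
      cform_commute[OF assms, of v u] algebra_simps power2_eq_square)

lemma rform_add_add:
  assumes "inner_product_space G"
  shows "rform G (a + b) (a + b) = rform G a a + 2 * rform G a b + rform G b b"
  using assms unfolding inner_product_space_def by (simp add: rform_add_left rform_add_right)

lemma rform_diff_diff: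
  assumes "inner_product_space G"
  shows "rform G (a - b) (a - b) = rform G a a - 2 * rform G a b + rform G b b"
  using assms unfolding inner_product_space_def by (simp add: rform_diff_left rform_diff_right)

lemma inner_product_space_exists_nonnull:
  fixes G :: "real^'n::finite^'n"
  assumes "inner_product_space G"
  obtains e where "rform G e e \<noteq> 0"
proof -
  have "\<exists>e. rform G e e \<noteq> 0"
  proof (rule ccontr)
    assume "\<not> ?thesis"
    then have "rform G a b = 0" for a b
      using rform_add_add[OF assms, of a b] by simp
    then have "axis (undefined :: 'n) (1::real) = 0"
      using assms unfolding inner_product_space_def by blast
    then show False
      by (simp add: axis_eq_0_iff)
  qed
  then show ?thesis
    using that by blast
qed

lemma exists_nonzero_orthogonal:
  assumes "CARD('n) \<ge> 2"
  obtains a :: "real^'n::finite" where "a \<noteq> 0" "rform G x a = 0"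
proof -
  have "2 \<le> DIM(real^'n)"
    using assms by simp
  then obtain a where "a \<noteq> 0" "orthogonal (transpose G *v x) a"
    using orthogonal_to_vector_exists by blast
  moreover have "rform G x a = inner (transpose G *v x) a"
    by (simp add: rform_eq_transpose inner_vec_def)
  ultimately show ?thesis
    using that orthogonal_def by metis
qed

text \<open>If every plane through x were degenerate, a nonzero a orthogonal to x would satisfy
  Q(x) Q(a \<pm> b) = (x,b)^2 for all b, forcing (a,b) = 0 for all b.\<close>
lemma exists_nondegenerate_plane:
  fixes G :: "real^'n::finite^'n"
  assumes ip: "inner_product_space G" and card: "CARD('n) \<ge> 2" and x: "rform G x x \<noteq> 0"
  obtains a where "rform G x x * rform G a a - (rform G x a)^2 \<noteq> 0"
proof -
  have "\<exists>a. rform G x x * rform G a a - (rform G x a)^2 \<noteq> 0"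
  proof (rule ccontr)
    assume "\<not> ?thesis"
    then have degenerate: "(rform G x a)^2 = rform G x x * rform G a a" for a
      by simp
    obtain a where a: "a \<noteq> 0" "rform G x a = 0"
      using exists_nonzero_orthogonal[OF card] .
    have "rform G a b = 0" for b
    proof -
      have plus: "rform G x x * (rform G a a + 2 * rform G a b + rform G b b) = (rform G x b)^2"
        using degenerate[of "a + b", unfolded rform_add_add[OF ip]] a(2) by (simp add: rform_add_right)
      have minus: "rform G x x * (rform G a a - 2 * rform G a b + rform G b b) = (rform G x b)^2"
        using degenerate[of "a - b", unfolded rform_diff_diff[OF ip]] a(2) by (simp add: rform_diff_right)
      have "rform G x x * (4 * rform G a b)
          = rform G x x * (rform G a a + 2 * rform G a b + rform G b b)
            - rform G x x * (rform G a a - 2 * rform G a b + rform G b b)"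
        by (simp add: algebra_simps)
      then have "rform G x x * (4 * rform G a b) = 0"
        by (simp only: plus minus diff_self)
      then show ?thesis
        using x by simp
    qed
    then show False
      using ip a(1) unfolding inner_product_space_def by blast
  qed
  then show ?thesis
    using that by blast
qed

section \<open>Polynomials vanishing to a given order\<close>

lemma order_ge_if_bigO_at_right:
  fixes p :: "complex poly"
  assumes big: "(\<lambda>u::real. poly p (a + of_real u)) \<in> O[at_right 0](\<lambda>u. of_real u ^ k)"
    and "p \<noteq> 0"
  shows "k \<le> order a p"
proof (rule ccontr)
  define j where "j = order a p"
  assume "\<not> k \<le> order a p"
  then have jk: "j < k"
    by (simp add: j_def)
  obtain q where pq: "p = [:-a, 1:] ^ j * q" and "\<not> [:-a, 1:] dvd q"
    using order_decomp[OF \<open>p \<noteq> 0\<close>] j_def by blast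
  then have qa: "poly q a \<noteq> 0"
    using poly_eq_0_iff_dvd by blast
  have "eventually (\<lambda>u::real. u > 0) (at_right 0)"
    by (simp add: eventually_at_right_less)
  then have nz: "eventually (\<lambda>u::real. (of_real u :: complex) ^ j \<noteq> 0) (at_right 0)"
    by eventually_elim simp
  have "(\<lambda>u::real. of_real u ^ j * poly q (a + of_real u))
      \<in> O[at_right 0](\<lambda>u. of_real u ^ j * (of_real u :: complex) ^ (k - j))"
    using big jk by (simp add: pq power_add[symmetric])
  then have "(\<lambda>u::real. poly q (a + of_real u)) \<in> O[at_right 0](\<lambda>u. (of_real u :: complex) ^ (k - j))"
    using landau_o.big.mult_cancel_left[OF bigtheta_refl nz] by blast
  also have "(\<lambda>u::real. (of_real u :: complex) ^ (k - j)) \<in> o[at_right 0](\<lambda>_. 1)"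
  proof (rule smalloI_tendsto)
    show "((\<lambda>u::real. (of_real u :: complex) ^ (k - j) / 1) \<longlongrightarrow> 0) (at_right 0)"
      using jk by (auto intro!: tendsto_eq_intros)
  qed simp
  finally have lim0: "((\<lambda>u::real. poly q (a + of_real u)) \<longlongrightarrow> 0) (at_right 0)"
    using smalloD_tendsto by fastforce
  have "((\<lambda>u::real. poly q (a + of_real u)) \<longlongrightarrow> poly q a) (at_right 0)"
    by (auto intro!: tendsto_eq_intros)
  then have "poly q a = 0"
    using tendsto_unique[OF trivial_limit_at_right_real _ lim0] by blast
  with qa show False ..
qed

lemma linear_power_dvd_if_bigO_at_right:
  fixes p :: "complex poly"
  assumes "(\<lambda>u::real. poly p (a + of_real u)) \<in> O[at_right 0](\<lambda>u. of_real u ^ k)"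
  shows "[:-a, 1:] ^ k dvd p"
  using order_ge_if_bigO_at_right[OF assms] order_divides by blast

lemma poly_eqI_infinite:
  fixes p q :: "'a::idom poly"
  assumes "infinite {x. poly p x = poly q x}"
  shows "p = q"
proof (rule ccontr)
  assume "p \<noteq> q"
  then have "finite {x. poly (p - q) x = 0}"
    by (intro poly_roots_finite) simp
  then show False
    using assms by simp
qed

lemma poly_eq_two_roots_power:
  fixes p :: "'a::idom poly"
  assumes deg: "degree p \<le> 2 * k" and dvd0: "[:0, 1:] ^ k dvd p"
    and dvd1: "[:-t0, 1:] ^ k dvd p" and "t0 \<noteq> 0"
  obtains c where "\<And>t. poly p t = c * t^k * (t - t0)^k"
proof (cases "p = 0")
  case True
  then show ?thesis
    using that[of 0] by simp
next
  case False
  obtain r where pr: "p = [:0, 1:] ^ k * r"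
    using dvd0 by (elim dvdE)
  have "order t0 ([:0, 1:] ^ k) = 0"
    by (rule order_0I) (simp add: \<open>t0 \<noteq> 0\<close>)
  moreover have "order t0 p = order t0 ([:0, 1:] ^ k) + order t0 r"
    using False pr order_mult by metis
  moreover have "k \<le> order t0 p"
    using dvd1 False order_divides by blast
  ultimately have "[:-t0, 1:] ^ k dvd r"
    using order_divides by (metis add_0)
  then obtain s where rs: "r = [:-t0, 1:] ^ k * s"
    by (elim dvdE)
  have "s \<noteq> 0"
    using False pr rs by auto
  then have "degree p = k + (k + degree s)"
    unfolding pr rs by (simp add: degree_mult_eq degree_linear_power)
  then have "degree s = 0"
    using deg by simp
  then obtain c where "s = [:c:]"
    by (metis degree_eq_zeroE)
  then show ?thesis
    using that[of c] unfolding pr rs by (simp add: poly_power mult_ac)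
qed

section \<open>Lines through the null cone\<close>

definition nullcone_bigO ::
  "real^'n^'n \<Rightarrow> ('n::finite \<Rightarrow> 'n \<Rightarrow> 'n \<Rightarrow> 'n \<Rightarrow> real) \<Rightarrow> nat \<Rightarrow> bool"
  where "nullcone_bigO G R k \<longleftrightarrow> (\<forall>x y :: complex^'n. cform G x x = 0 \<longrightarrow>
    (\<lambda>t::real. ctrace_jacobi G R k (x + complex_of_real t *s y))
      \<in> O[at_right 0](\<lambda>t. complex_of_real t ^ k))"

lemma ctrace_jacobi_null_eq_0:
  assumes big: "nullcone_bigO G R k" and "k \<ge> 1" and null: "cform G z z = 0"
  shows "ctrace_jacobi G R k z = 0"
proof (rule ccontr)
  let ?c = "ctrace_jacobi G R k z"
  assume "?c \<noteq> 0"
  have "(\<lambda>t::real. ctrace_jacobi G R k (z + complex_of_real t *s 0))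
      \<in> O[at_right 0](\<lambda>t. complex_of_real t ^ k)"
    using big null unfolding nullcone_bigO_def by blast
  then have "k \<le> order 0 [:?c:]"
    by (intro order_ge_if_bigO_at_right) (simp_all add: \<open>?c \<noteq> 0\<close>)
  moreover have "order 0 [:?c:] = 0"
    using \<open>?c \<noteq> 0\<close> by (intro order_0I) simp
  ultimately show False
    using \<open>k \<ge> 1\<close> by simp
qed

lemma ctrace_jacobi_two_null_points:
  assumes ip: "inner_product_space G" and big: "nullcone_bigO G R k"
    and null0: "cform G u u = 0" and null1: "cform G (u + t0 *s v) (u + t0 *s v) = 0"
    and "t0 \<noteq> 0"
  obtains c where "\<And>t. ctrace_jacobi G R k (u + t *s v) = c * t^k * (t - t0)^k"
proof -
  obtain p where deg: "degree p \<le> 2 * k" and p: "\<And>t. ctrace_jacobi G R k (u + t *s v) = poly p t"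
    using ctrace_jacobi_line_poly[OF ip] by metis
  have "[:-0, 1:] ^ k dvd p"
  proof (rule linear_power_dvd_if_bigO_at_right)
    show "(\<lambda>s::real. poly p (0 + complex_of_real s)) \<in> O[at_right 0](\<lambda>s. complex_of_real s ^ k)"
      using big null0 unfolding nullcone_bigO_def by (simp flip: p)
  qed
  moreover have "[:-t0, 1:] ^ k dvd p"
  proof (rule linear_power_dvd_if_bigO_at_right)
    have shift: "(u + t0 *s v) + s *s v = u + (t0 + s) *s v" for s
      by (simp add: vec_eq_iff algebra_simps)
    have "(\<lambda>s::real. ctrace_jacobi G R k ((u + t0 *s v) + complex_of_real s *s v))
        \<in> O[at_right 0](\<lambda>s. complex_of_real s ^ k)"
      using big null1 unfolding nullcone_bigO_def by blast
    then show "(\<lambda>s::real. poly p (t0 + complex_of_real s)) \<in> O[at_right 0](\<lambda>s. complex_of_real s ^ k)"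
      by (simp only: shift p)
  qed
  ultimately obtain c where "\<And>t. poly p t = c * t^k * (t - t0)^k"
    using poly_eq_two_roots_power[OF deg _ _ \<open>t0 \<noteq> 0\<close>] by (metis minus_zero)
  then show ?thesis
    using that[of c] by (simp only: p)
qed

text \<open>Homogeneity turns the line u + t v into s u + v = s^2 (u + v/s) near s = 0, where the
  factor (t (t - t0))^k becomes (1 - t0 s)^k.\<close>
lemma ctrace_jacobi_direction:
  assumes ip: "inner_product_space G"
    and line: "\<And>t. ctrace_jacobi G R k (u + t *s v) = c * t^k * (t - t0)^k"
  shows "ctrace_jacobi G R k v = c"
proof -
  obtain q where q: "\<And>s. ctrace_jacobi G R k (v + s *s u) = poly q s"
    using ctrace_jacobi_line_poly[OF ip] by metis
  define r where "r = smult c ([:1, -t0:] ^ k)"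
  have "poly q s = poly r s" if "s \<noteq> 0" for s
  proof -
    have "v + s *s u = s *s (u + (1/s) *s v)"
      using that by (simp add: vec_eq_iff algebra_simps)
    then have "poly q s = ctrace_jacobi G R k (s *s (u + (1/s) *s v))"
      by (metis q)
    also have "\<dots> = (s * s)^k * (c * (1/s)^k * (1/s - t0)^k)"
      unfolding ctrace_jacobi_scale[OF ip] line by (simp add: power_mult power2_eq_square)
    also have "\<dots> = c * ((s * (1/s)) * (s * (1/s - t0)))^k"
      by (simp only: power_mult_distrib mult_ac)
    also have "\<dots> = poly r s"
      using that by (simp add: r_def poly_power algebra_simps)
    finally show ?thesis .
  qed
  then have "- {0} \<subseteq> {s. poly q s = poly r s}"
    by auto
  moreover have "infinite (- {0 :: complex})"
    by (simp add: infinite_UNIV_char_0)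
  ultimately have "q = r"
    by (intro poly_eqI_infinite) (rule infinite_super)
  then show ?thesis
    using q[of 0] by (simp add: r_def)
qed

lemma ctrace_jacobi_pencil:
  assumes ip: "inner_product_space G" and big: "nullcone_bigO G R k"
    and n: "cform G n n = 0" and w: "cform G w w \<noteq> 0" and nw: "cform G n w \<noteq> 0"
  shows "ctrace_jacobi G R k (n + t *s w) * cform G w w ^ k
    = ctrace_jacobi G R k w * cform G (n + t *s w) (n + t *s w) ^ k"
proof -
  define t0 where "t0 = - 2 * cform G n w / cform G w w"
  have Q: "cform G (n + s *s w) (n + s *s w) = s * (s - t0) * cform G w w" for s
    using w by (simp add: cform_line[OF ip] n t0_def field_simps power2_eq_square)
  have "t0 \<noteq> 0"
    using nw w by (simp add: t0_def)
  then obtain c where c: "\<And>t. ctrace_jacobi G R k (n + t *s w) = c * t^k * (t - t0)^k"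
    using ctrace_jacobi_two_null_points[OF ip big n] Q[of t0] by auto
  then have "ctrace_jacobi G R k w = c"
    by (rule ctrace_jacobi_direction[OF ip])
  then show ?thesis
    by (simp add: c Q power_mult_distrib mult_ac)
qed

definition cgram :: "real^'n^'n \<Rightarrow> complex^'n::finite \<Rightarrow> complex^'n \<Rightarrow> complex"
  where "cgram G v w = cform G v v * cform G w w - (cform G v w)^2"

text \<open>v lies on the line n + t w through the null vector n = v - t w, where t is a root of
  Q(v - t w) = Q(v) - 2 t (v,w) + t^2 Q(w); the discriminant is -cgram G v w, and (n,w) = -r.\<close>
lemma ctrace_jacobi_ratio:
  assumes ip: "inner_product_space G" and big: "nullcone_bigO G R k"
    and w: "cform G w w \<noteq> 0" and vw: "cgram G v w \<noteq> 0"
  shows "ctrace_jacobi G R k v * cform G w w ^ k = ctrace_jacobi G R k w * cform G v v ^ k"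
proof -
  define r where "r = csqrt ((cform G v w)^2 - cform G v v * cform G w w)"
  define t where "t = (cform G v w + r) / cform G w w"
  define n where "n = v + (-t) *s w"
  have r2: "r^2 = (cform G v w)^2 - cform G v v * cform G w w"
    by (simp add: r_def)
  have tw: "t * cform G w w = cform G v w + r"
    using w by (simp add: t_def)
  have "cform G w w * cform G n n
      = cform G w w * (cform G v v + 2 * (-t) * cform G v w + (-t)^2 * cform G w w)"
    unfolding n_def cform_line[OF ip] ..
  also have "\<dots>
      = cform G v v * cform G w w - 2 * (t * cform G w w) * cform G v w + (t * cform G w w)^2"
    by (simp add: algebra_simps power2_eq_square)
  also have "\<dots> = 0"
    unfolding tw using r2 by (simp add: algebra_simps power2_eq_square)
  finally have n: "cform G n n = 0"
    using w by simp
  have "r \<noteq> 0"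
    using r2 vw by (auto simp: cgram_def)
  moreover have "cform G n w = cform G v w - t * cform G w w"
    unfolding n_def cform_add_left cform_scale_left by simp
  ultimately have nw: "cform G n w \<noteq> 0"
    by (simp add: tw)
  have "n + t *s w = v"
    by (simp add: n_def vec_eq_iff)
  then show ?thesis
    using ctrace_jacobi_pencil[OF ip big n w nw, of t] by simp
qed

section \<open>Genericity\<close>

definition poly_on_lines :: "(complex^'n::finite \<Rightarrow> complex) \<Rightarrow> bool"
  where "poly_on_lines f \<longleftrightarrow> (\<forall>a b. \<exists>p. \<forall>s. f (a + s *s b) = poly p s)"

lemma poly_on_lines_const: "poly_on_lines (\<lambda>z. c)"
  unfolding poly_on_lines_def by (auto intro: exI[of _ "[:c:]"])

lemma poly_on_lines_mult: "poly_on_lines f \<Longrightarrow> poly_on_lines g \<Longrightarrow> poly_on_lines (\<lambda>z. f z * g z)"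
  unfolding poly_on_lines_def by (metis poly_mult)

lemma poly_on_lines_diff: "poly_on_lines f \<Longrightarrow> poly_on_lines g \<Longrightarrow> poly_on_lines (\<lambda>z. f z - g z)"
  unfolding poly_on_lines_def by (metis poly_diff)

lemma poly_on_lines_cform_right:
  fixes G :: "real^'n::finite^'n"
  shows "poly_on_lines (\<lambda>z. cform G x z)"
  unfolding poly_on_lines_def
proof (intro allI)
  fix a b :: "complex^'n"
  show "\<exists>p. \<forall>s. cform G x (a + s *s b) = poly p s"
    by (intro exI[of _ "[:cform G x a, cform G x b:]"]) (simp add: cform_add_right cform_scale_right)
qed

lemma poly_on_lines_cform_self:
  fixes G :: "real^'n::finite^'n"
  assumes "inner_product_space G"
  shows "poly_on_lines (\<lambda>z. cform G z z)"
  unfolding poly_on_lines_def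
proof (intro allI)
  fix a b :: "complex^'n"
  show "\<exists>p. \<forall>s. cform G (a + s *s b) (a + s *s b) = poly p s"
    by (intro exI[of _ "[:cform G a a, 2 * cform G a b, cform G b b:]"])
      (simp add: cform_line[OF assms] algebra_simps power2_eq_square)
qed

lemma poly_on_lines_cgram:
  assumes "inner_product_space G"
  shows "poly_on_lines (cgram G x)"
  unfolding cgram_def power2_eq_square
  by (intro poly_on_lines_diff poly_on_lines_mult poly_on_lines_const poly_on_lines_cform_right
      poly_on_lines_cform_self[OF assms])

lemma poly_on_lines_mult_nonzero:
  assumes f: "poly_on_lines f" and g: "poly_on_lines g" and "f a \<noteq> 0" and "g b \<noteq> 0"
  obtains z where "f z * g z \<noteq> 0"
proof -
  obtain p where p: "\<And>s. f (a + s *s (b - a)) = poly p s"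
    using f unfolding poly_on_lines_def by blast
  obtain q where q: "\<And>s. g (a + s *s (b - a)) = poly q s"
    using g unfolding poly_on_lines_def by blast
  have "a + 1 *s (b - a) = b"
    by (simp add: vec_eq_iff)
  then have "p \<noteq> 0" "q \<noteq> 0"
    using p[of 0] q[of 1] assms(3,4) by auto
  then have "poly (p * q) \<noteq> (\<lambda>_. 0)"
    by (metis no_zero_divisors poly_all_0_iff_0)
  then obtain s where "poly (p * q) s \<noteq> 0"
    by blast
  then have "f (a + s *s (b - a)) * g (a + s *s (b - a)) \<noteq> 0"
    by (metis p q poly_mult)
  then show ?thesis
    by (rule that)
qed

lemma exists_generic_direction:
  assumes ip: "inner_product_space G" and card: "CARD('n) \<ge> 2"
    and x: "rform G x x \<noteq> 0" and e: "rform G e e \<noteq> 0"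
  obtains z :: "complex^'n::finite"
    where "cform G z z \<noteq> 0" "cgram G (cvec x) z \<noteq> 0" "cgram G (cvec e) z \<noteq> 0"
proof -
  have cgram_cvec: "cgram G (cvec u) (cvec a)
      = complex_of_real (rform G u u * rform G a a - (rform G u a)^2)" for u a
    by (simp add: cgram_def cform_cvec)
  note Q = poly_on_lines_cform_self[OF ip] and gram = poly_on_lines_cgram[OF ip]
  obtain a where "rform G x x * rform G a a - (rform G x a)^2 \<noteq> 0"
    using exists_nondegenerate_plane[OF ip card x] .
  then have xa: "cgram G (cvec x) (cvec a) \<noteq> 0"
    unfolding cgram_cvec of_real_eq_0_iff .
  obtain b where "rform G e e * rform G b b - (rform G e b)^2 \<noteq> 0"
    using exists_nondegenerate_plane[OF ip card e] .
  then have eb: "cgram G (cvec e) (cvec b) \<noteq> 0"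
    unfolding cgram_cvec of_real_eq_0_iff .
  have "cform G (cvec x) (cvec x) \<noteq> 0"
    using x by (simp add: cform_cvec)
  then obtain z1 where "cform G z1 z1 * cgram G (cvec x) z1 \<noteq> 0"
    using poly_on_lines_mult_nonzero[OF Q gram _ xa] by blast
  then obtain z where "(cform G z z * cgram G (cvec x) z) * cgram G (cvec e) z \<noteq> 0"
    using poly_on_lines_mult_nonzero[OF poly_on_lines_mult[OF Q gram] gram _ eb] by blast
  then show ?thesis
    using that by auto
qed

section \<open>Osserman tensors\<close>

lemma rtrace_jacobi_ratio:
  fixes G :: "real^'n::finite^'n"
  assumes ip: "inner_product_space G" and card: "CARD('n) \<ge> 2" and big: "nullcone_bigO G R k"
    and x: "rform G x x \<noteq> 0" and e: "rform G e e \<noteq> 0"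
  shows "rtrace_jacobi G R k x * rform G e e ^ k = rtrace_jacobi G R k e * rform G x x ^ k"
proof -
  obtain z :: "complex^'n" where z: "cform G z z \<noteq> 0"
    and xz: "cgram G (cvec x) z \<noteq> 0" and ez: "cgram G (cvec e) z \<noteq> 0"
    using exists_generic_direction[OF ip card x e] .
  let ?fx = "ctrace_jacobi G R k (cvec x)" and ?fe = "ctrace_jacobi G R k (cvec e)"
    and ?fz = "ctrace_jacobi G R k z" and ?qx = "cform G (cvec x) (cvec x) ^ k"
    and ?qe = "cform G (cvec e) (cvec e) ^ k" and ?qz = "cform G z z ^ k"
  have "?fx * ?qe * ?qz = (?fx * ?qz) * ?qe"
    by (simp only: ac_simps)
  also have "\<dots> = (?fz * ?qx) * ?qe"
    by (simp only: ctrace_jacobi_ratio[OF ip big z xz])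
  also have "\<dots> = (?fz * ?qe) * ?qx"
    by (simp only: ac_simps)
  also have "\<dots> = (?fe * ?qz) * ?qx"
    by (simp only: ctrace_jacobi_ratio[OF ip big z ez])
  also have "\<dots> = ?fe * ?qx * ?qz"
    by (simp only: ac_simps)
  finally have "?fx * ?qe = ?fe * ?qx"
    using z by simp
  then have "complex_of_real (rtrace_jacobi G R k x * rform G e e ^ k)
      = complex_of_real (rtrace_jacobi G R k e * rform G x x ^ k)"
    by (simp add: ctrace_jacobi_cvec[OF ip] cform_cvec)
  then show ?thesis
    by (simp only: of_real_eq_iff)
qed

lemma osserman1_if_nullcone_bigO:
  fixes G :: "real^'n::finite^'n"
  assumes card: "CARD('n) \<ge> 2" and ip: "inner_product_space G"
    and big: "\<And>k. k \<ge> 1 \<Longrightarrow> nullcone_bigO G R k"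
  shows "osserman1 G R"
  unfolding osserman1_def
proof
  fix k :: nat
  show "\<exists>c. \<forall>x. trace (mpow (rjacobi G R x) k) = c * rform G x x ^ k"
  proof (cases "k = 0")
    case True
    then show ?thesis
      by (intro exI[of _ "real CARD('n)"]) (simp add: trace_I)
  next
    case False
    obtain e where e: "rform G e e \<noteq> 0"
      using inner_product_space_exists_nonnull[OF ip] .
    have "rtrace_jacobi G R k x = rtrace_jacobi G R k e / rform G e e ^ k * rform G x x ^ k" for x
    proof (cases "rform G x x = 0")
      case True
      then have "ctrace_jacobi G R k (cvec x) = 0"
        using False by (intro ctrace_jacobi_null_eq_0[OF big]) (simp_all add: cform_cvec)
      then show ?thesis
        using True False by (simp add: ctrace_jacobi_cvec[OF ip])
    next
      case x: False
      show ?thesis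
        using rtrace_jacobi_ratio[OF ip card big x e] False e by (simp add: field_simps)
    qed
    then show ?thesis
      unfolding rtrace_jacobi_def by blast
  qed
qed

text \<open>Both sides are polynomials in s along the line Re z + s Im z, and they agree for real s.\<close>
lemma ctrace_jacobi_eq_if_rtrace_jacobi_eq:
  assumes ip: "inner_product_space G" and c: "\<And>x. rtrace_jacobi G R k x = c * rform G x x ^ k"
  shows "ctrace_jacobi G R k z = complex_of_real c * cform G z z ^ k"
proof -
  define a where "a = (\<chi> i. Re (z$i))"
  define b where "b = (\<chi> i. Im (z$i))"
  obtain p where p: "\<And>s. ctrace_jacobi G R k (cvec a + s *s cvec b) = poly p s"
    using ctrace_jacobi_line_poly[OF ip] by metis
  define q where "q = smult (complex_of_real c)
    ([:cform G (cvec a) (cvec a), 2 * cform G (cvec a) (cvec b), cform G (cvec b) (cvec b):] ^ k)"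
  have q: "poly q s = complex_of_real c * cform G (cvec a + s *s cvec b) (cvec a + s *s cvec b) ^ k" for s
    by (simp add: q_def poly_power cform_line[OF ip] algebra_simps power2_eq_square)
  have "poly p (complex_of_real s) = poly q (complex_of_real s)" for s
  proof -
    have "cvec a + complex_of_real s *s cvec b = cvec (a + s *s b)"
      by (simp add: vec_eq_iff)
    then show ?thesis
      unfolding p[symmetric] q by (simp add: ctrace_jacobi_cvec[OF ip] c cform_cvec)
  qed
  then have "range complex_of_real \<subseteq> {s. poly p s = poly q s}"
    by auto
  moreover have "infinite (range complex_of_real)"
    using finite_imageD[OF _ inj_of_real] infinite_UNIV_char_0 by blast
  ultimately have "p = q"
    by (intro poly_eqI_infinite) (rule infinite_super)
  moreover have "z = cvec a + \<i> *s cvec b"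
    by (simp add: vec_eq_iff a_def b_def complex_eq[symmetric] mult.commute)
  ultimately show ?thesis
    using p[of \<i>] q[of \<i>] by simp
qed

lemma nullcone_bigO_if_osserman1:
  fixes G :: "real^'n::finite^'n"
  assumes ip: "inner_product_space G" and "osserman1 G R"
  shows "nullcone_bigO G R k"
  unfolding nullcone_bigO_def
proof (intro allI impI)
  fix x y :: "complex^'n"
  assume x: "cform G x x = 0"
  obtain c where "\<And>x. rtrace_jacobi G R k x = c * rform G x x ^ k"
    using assms(2) unfolding osserman1_def rtrace_jacobi_def by blast
  then have ctrace: "ctrace_jacobi G R k z = complex_of_real c * cform G z z ^ k" for z
    by (rule ctrace_jacobi_eq_if_rtrace_jacobi_eq[OF ip])
  have "cform G (x + complex_of_real t *s y) (x + complex_of_real t *s y)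
      = complex_of_real t * (2 * cform G x y + complex_of_real t * cform G y y)" for t
    by (simp add: cform_line[OF ip] x power2_eq_square algebra_simps)
  then have f: "ctrace_jacobi G R k (x + complex_of_real t *s y) = complex_of_real t ^ k
      * (complex_of_real c * (2 * cform G x y + complex_of_real t * cform G y y) ^ k)" for t
    by (simp add: ctrace power_mult_distrib)
  have "(\<lambda>t::real. complex_of_real c * (2 * cform G x y + complex_of_real t * cform G y y) ^ k)
      \<in> O[at_right 0](\<lambda>_. 1)"
    by (rule bigoI_tendsto[where c = "complex_of_real c * (2 * cform G x y) ^ k"])
      (auto intro!: tendsto_eq_intros)
  then have "(\<lambda>t::real. complex_of_real t ^ k
      * (complex_of_real c * (2 * cform G x y + complex_of_real t * cform G y y) ^ k))
      \<in> O[at_right 0](\<lambda>t. complex_of_real t ^ k * 1)"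
    by (rule landau_o.big.mult_left)
  then show "(\<lambda>t::real. ctrace_jacobi G R k (x + complex_of_real t *s y))
      \<in> O[at_right 0](\<lambda>t. complex_of_real t ^ k)"
    by (simp add: f)
qed

theorem lemma2p2:
  fixes G :: "real^'n^'n" and R :: "'n \<Rightarrow> 'n \<Rightarrow> 'n \<Rightarrow> 'n \<Rightarrow> real"
  assumes "CARD('n) \<ge> 3"
    and "inner_product_space G"
    and "alg_curv_tensor R"
  shows "osserman1 G R \<longleftrightarrow>
    (\<forall>x y :: complex^'n. \<forall>k::nat. cform G x x = 0 \<longrightarrow> k \<ge> 1 \<longrightarrow>
       (\<lambda>t::real. trace (mpow (cjacobi G R (x + complex_of_real t *s y)) k))
         \<in> O[at_right 0](\<lambda>t. (complex_of_real t) ^ k))"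
proof -
  have "CARD('n) \<ge> 2"
    using assms(1) by simp
  then have "osserman1 G R \<longleftrightarrow> (\<forall>k. k \<ge> 1 \<longrightarrow> nullcone_bigO G R k)"
    using osserman1_if_nullcone_bigO[OF _ assms(2)] nullcone_bigO_if_osserman1[OF assms(2)] by blast
  also have "\<dots> \<longleftrightarrow> (\<forall>x y :: complex^'n. \<forall>k::nat. cform G x x = 0 \<longrightarrow> k \<ge> 1 \<longrightarrow>
       (\<lambda>t::real. trace (mpow (cjacobi G R (x + complex_of_real t *s y)) k))
         \<in> O[at_right 0](\<lambda>t. (complex_of_real t) ^ k))"
    unfolding nullcone_bigO_def ctrace_jacobi_def by auto
  finally show ?thesis .
qed

end
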